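(* Let $1<A'<A<B$. There exists a constant $C>0$, depending only on $A,A',B$, such that the following holds: if $f\in(\mathscr{A}^{(B)})^n$ satisfies $\|f\|_B<C$, and $Y=X+f(X)$ (where $X=(X_1,\dots,X_n)$ is the tuple of generators) satisfies $\|Y\|_{A'}\le A$, then there exists $G\in(\mathscr{A}^{(A)})^n$ such that $X=G(Y)$ in $(\mathscr{A}^{(A')})^n$.
   Context: $\mathscr{A}=\mathbb{C}\langle X_1,\dots,X_n\rangle$ is the algebra of non-commutative polynomials. For a polynomial $P=\sum_q\lambda_q(P)q$ (sum over monomials $q$) and $A>1$, $\|P\|_A=\sum_q|\lambda_q(P)|A^{\deg q}$; $\mathscr{A}^{(A)}$ is the completion (Banach algebra of absolutely convergent non-commutative power series). For tuples, $\|G\|_A=\max_j\|G_j\|_A$. An element of $\mathscr{A}^{(A)}$ can be evaluated at any $n$-tuple of elements of a Banach algebra of norms at most $A$; in particular $G(Y)$ is defined in $\mathscr{A}^{(A')}$ when $\|Y_j\|_{A'}\le A$. *)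

theory Defs
  imports "HOL-Analysis.Analysis"
begin

text \<open>Non-commutative power series in n variables X_0,...,X_{n-1}: a monomial is a
word (list of variable indices), a series is its coefficient function.\<close>

type_synonym ncser = "nat list \<Rightarrow> complex"

definition ncnorm :: "real \<Rightarrow> ncser \<Rightarrow> real" where
  "ncnorm A P = (\<Sum>\<^sub>\<infinity> w. norm (P w) * A ^ length w)"

definition in_ncA :: "nat \<Rightarrow> real \<Rightarrow> ncser \<Rightarrow> bool" where
  "in_ncA n A P \<longleftrightarrow> (\<forall>w. \<not> set w \<subseteq> {..<n} \<longrightarrow> P w = 0)
      \<and> (\<lambda>w. norm (P w) * A ^ length w) summable_on UNIV"

definition ncone :: ncser where
  "ncone w = (if w = [] then 1 else 0)"

definition ncgen :: "nat \<Rightarrow> ncser" where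
  "ncgen j w = (if w = [j] then 1 else 0)"

definition ncmult :: "ncser \<Rightarrow> ncser \<Rightarrow> ncser" where
  "ncmult P Q w = (\<Sum>i\<le>length w. P (take i w) * Q (drop i w))"

definition ncmon :: "(nat \<Rightarrow> ncser) \<Rightarrow> nat list \<Rightarrow> ncser" where
  "ncmon Y q = foldr (\<lambda>j acc. ncmult (Y j) acc) q ncone"

definition ncsubst :: "ncser \<Rightarrow> (nat \<Rightarrow> ncser) \<Rightarrow> ncser" where
  "ncsubst G Y w = (\<Sum>\<^sub>\<infinity> q. G q * ncmon Y q w)"

end

theory Submission
  imports Defs
begin

text \<open>
  Write F for the tuple f extended by zero outside the n variables, M = (A + B)/2 and
  C = (B - A)/4.  The inverse is constructed as a fixed point: the map
  \<Phi>(G)_i = X_i - F_i(G) sends the tuples of A-norm at most M into themselves and is a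
  1/2-contraction there, by the Lipschitz estimate
  \<parallel>P(G) - P(H)\<parallel>_A \<le> \<parallel>P\<parallel>_B d / (B - M)  when  \<parallel>G_i\<parallel>_A, \<parallel>H_i\<parallel>_A \<le> M,  \<parallel>G_i - H_i\<parallel>_A \<le> d.
  Its Picard iterates converge coefficientwise to a fixed point G, i.e. G + F(G) = X.
  Then Z = G(Y) satisfies Z + F(Z) = (G + F(G))(Y) = Y = X + F(X), and the same
  contraction estimate (now in the A'-norm) forces Z = X, i.e. X = G(Y).
\<close>

section \<open>The algebra of words\<close>

definition ncdelta :: "nat list \<Rightarrow> ncser" where "ncdelta q w = (if w = q then 1 else 0)"
definition ncshift :: "nat \<Rightarrow> ncser \<Rightarrow> ncser" where "ncshift x P w = P (x # w)"

lemma ncmult_Nil[simp]: "ncmult P Q [] = P [] * Q []"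
  by (simp add: ncmult_def)

lemma ncmult_Cons: "ncmult P Q (x#w) = P [] * Q (x#w) + ncmult (ncshift x P) Q w"
  unfolding ncmult_def ncshift_def
  by (simp add: sum.atMost_Suc_shift del: sum.atMost_Suc)

lemma ncmult_linear_left: "ncmult (\<lambda>w. a * F w + G w) R w = a * ncmult F R w + ncmult G R w"
  unfolding ncmult_def by (simp add: sum_distrib_left sum.distrib algebra_simps)

lemma ncmult_assoc: "ncmult (ncmult P Q) R w = ncmult P (ncmult Q R) w"
proof (induction w arbitrary: P Q R)
  case Nil then show ?case by simp
next
  case (Cons x w)
  have shift: "ncshift x (ncmult P Q) = (\<lambda>w. P [] * ncshift x Q w + ncmult (ncshift x P) Q w)"
    by (rule ext) (simp add: ncshift_def ncmult_Cons)
  have "ncmult (ncmult P Q) R (x#w) =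
      P [] * Q [] * R (x#w) + (P [] * ncmult (ncshift x Q) R w + ncmult (ncmult (ncshift x P) Q) R w)"
    by (simp add: ncmult_Cons shift ncmult_linear_left)
  also have "\<dots> = ncmult P (ncmult Q R) (x#w)"
    by (simp add: ncmult_Cons Cons.IH algebra_simps)
  finally show ?case .
qed

lemma ncmult_zero_left: "ncmult (\<lambda>_. 0) P w = 0"
  by (simp add: ncmult_def)

lemma ncmult_one_left: "ncmult ncone P w = P w"
proof (cases w)
  case Nil then show ?thesis by (simp add: ncone_def)
next
  case (Cons x w')
  have "ncshift x ncone = (\<lambda>_. 0)" by (rule ext) (simp add: ncshift_def ncone_def)
  then show ?thesis using Cons by (simp add: ncmult_Cons ncone_def ncmult_zero_left)
qed

lemma ncmult_one_right: "ncmult P ncone w = P w"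
proof (induction w arbitrary: P)
  case Nil then show ?case by (simp add: ncone_def)
next
  case (Cons x w) then show ?case by (simp add: ncmult_Cons ncone_def ncshift_def)
qed

lemma ncmult_diff:
  "ncmult G Gq w - ncmult H Hq w = ncmult G (\<lambda>x. Gq x - Hq x) w + ncmult (\<lambda>x. G x - H x) Hq w"
  unfolding ncmult_def by (simp add: sum_subtractf[symmetric] sum.distrib[symmetric] algebra_simps)

lemma ncmon_Nil[simp]: "ncmon Y [] = ncone"
  by (simp add: ncmon_def)

lemma ncmon_Cons: "ncmon Y (j#q) = ncmult (Y j) (ncmon Y q)"
  by (simp add: ncmon_def)

lemma ncmon_append: "ncmon Y (u@v) = ncmult (ncmon Y u) (ncmon Y v)"
proof (induction u)
  case Nil then show ?case by (simp add: fun_eq_iff ncmult_one_left)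
next
  case (Cons j u) show ?case by (rule ext) (simp add: ncmon_Cons Cons.IH ncmult_assoc)
qed

lemma ncmon_cong: "(\<And>i. i \<in> set q \<Longrightarrow> Y i = Y' i) \<Longrightarrow> ncmon Y q = ncmon Y' q"
  by (induction q) (auto simp: ncmon_Cons)

lemma ncgen_ncdelta: "ncgen j = ncdelta [j]"
  by (simp add: fun_eq_iff ncgen_def ncdelta_def)

lemma ncone_ncdelta: "ncone = ncdelta []"
  by (simp add: fun_eq_iff ncone_def ncdelta_def)

lemma ncmon_ncgen: "ncmon ncgen q = ncdelta q"
proof (induction q)
  case Nil then show ?case by (simp add: ncone_ncdelta)
next
  case (Cons j q)
  show ?case
  proof (rule ext)
    fix w show "ncmon ncgen (j#q) w = ncdelta (j#q) w"
    proof (cases w)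
      case Nil then show ?thesis by (simp add: ncmon_Cons Cons ncdelta_def ncgen_def)
    next
      case (Cons x w')
      have "ncshift x (ncgen j) = (if x = j then ncone else (\<lambda>_. 0))"
        by (rule ext) (simp add: ncshift_def ncgen_def ncone_def)
      then show ?thesis using Cons \<open>ncmon ncgen q = ncdelta q\<close>
        by (simp add: ncmon_Cons ncmult_Cons ncgen_def ncmult_one_left ncmult_zero_left ncdelta_def)
    qed
  qed
qed

lemma ncmult_has_sum_pairs: "((\<lambda>(u,v). P u * Q v * ncdelta (u@v) w) has_sum ncmult P Q w) UNIV"
proof -
  let ?split = "\<lambda>i. (take i w, drop i w)"
  let ?S = "?split ` {..length w}"
  have inj: "inj_on ?split {..length w}"
    by (rule inj_onI) (metis Pair_inject atMost_iff length_take min.absorb2)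
  have outside: "(\<lambda>(u,v). P u * Q v * ncdelta (u@v) w) x = 0" if "x \<notin> ?S" for x
  proof (cases x)
    case (Pair u v)
    have "u @ v \<noteq> w"
    proof
      assume h: "u @ v = w"
      then have "x = ?split (length u)" and "length u \<in> {..length w}" using Pair by auto
      then show False using that by blast
    qed
    then show ?thesis using Pair by (simp add: ncdelta_def)
  qed
  have "((\<lambda>(u,v). P u * Q v * ncdelta (u@v) w) has_sum ncmult P Q w) ?S"
    by (rule has_sum_finiteI) (simp_all add: sum.reindex[OF inj] ncmult_def ncdelta_def)
  then show ?thesis
    by (rule has_sum_cong_neutral[THEN iffD1, rotated -1]) (use outside in auto)
qed

section \<open>Weighted norms\<close>

definition nc_summable :: "real \<Rightarrow> ncser \<Rightarrow> bool" where
  "nc_summable A P \<longleftrightarrow> (\<lambda>w. norm (P w) * A ^ length w) summable_on UNIV"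

lemma ncnorm_nonneg: "A \<ge> 0 \<Longrightarrow> 0 \<le> ncnorm A P"
  unfolding ncnorm_def by (rule infsum_nonneg) simp

text \<open>Each weighted coefficient is bounded by the norm; this turns norm estimates into
  coefficientwise convergence.\<close>
lemma ncnorm_coeff_le:
  assumes "A \<ge> 0" "nc_summable A P" shows "norm (P w) * A ^ length w \<le> ncnorm A P"
proof -
  have "sum (\<lambda>w. norm (P w) * A ^ length w) {w} \<le> ncnorm A P"
    unfolding ncnorm_def
    by (rule finite_sum_le_infsum) (use assms in \<open>auto simp: nc_summable_def\<close>)
  then show ?thesis by simp
qed

lemma ncnorm_eq0:
  assumes "A > 0" "nc_summable A P" "ncnorm A P \<le> 0" shows "P w = 0"
proof -
  have "norm (P w) * A ^ length w \<le> 0" using ncnorm_coeff_le[of A P w] assms by auto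
  moreover have "A ^ length w > 0" using assms by simp
  ultimately show ?thesis by (simp add: mult_le_0_iff)
qed

lemma ncnorm_lincomb:
  assumes "A \<ge> 0" "nc_summable A P" "nc_summable A Q"
  shows "nc_summable A (\<lambda>w. a * P w + b * Q w)"
    "ncnorm A (\<lambda>w. a * P w + b * Q w) \<le> norm a * ncnorm A P + norm b * ncnorm A Q"
proof -
  let ?f = "\<lambda>w. norm (a * P w + b * Q w) * A ^ length w"
  let ?g = "\<lambda>w. norm a * (norm (P w) * A ^ length w) + norm b * (norm (Q w) * A ^ length w)"
  have sg: "?g summable_on UNIV"
    using assms by (intro summable_on_add summable_on_cmult_right) (auto simp: nc_summable_def)
  have le: "?f w \<le> ?g w" for w
  proof -
    have "norm (a * P w + b * Q w) \<le> norm a * norm (P w) + norm b * norm (Q w)"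
      by (metis norm_mult norm_triangle_ineq)
    then show ?thesis using assms(1)
      by (metis (no_types, lifting) distrib_right mult.assoc mult_right_mono zero_le_power)
  qed
  show sf: "nc_summable A (\<lambda>w. a * P w + b * Q w)" unfolding nc_summable_def
    by (rule summable_on_comparison_test[OF sg]) (use le assms in auto)
  have "ncnorm A (\<lambda>w. a * P w + b * Q w) \<le> infsum ?g UNIV"
    unfolding ncnorm_def by (rule infsum_mono[OF sf[unfolded nc_summable_def] sg]) (rule le)
  also have "infsum ?g UNIV = norm a * ncnorm A P + norm b * ncnorm A Q"
    using assms unfolding ncnorm_def nc_summable_def
    by (subst infsum_add) (auto intro!: summable_on_cmult_right simp: infsum_cmult_right)
  finally show "ncnorm A (\<lambda>w. a * P w + b * Q w) \<le> norm a * ncnorm A P + norm b * ncnorm A Q" .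
qed

lemma ncnorm_diff:
  assumes "A \<ge> 0" "nc_summable A P" "nc_summable A Q"
  shows "nc_summable A (\<lambda>w. P w - Q w)" "ncnorm A (\<lambda>w. P w - Q w) \<le> ncnorm A P + ncnorm A Q"
  using ncnorm_lincomb[OF assms, of 1 "-1"] by auto

lemma ncnorm_add:
  assumes "A \<ge> 0" "nc_summable A P" "nc_summable A Q"
  shows "nc_summable A (\<lambda>w. P w + Q w)" "ncnorm A (\<lambda>w. P w + Q w) \<le> ncnorm A P + ncnorm A Q"
  using ncnorm_lincomb[OF assms, of 1 1] by auto

lemma ncnorm_diff_commute: "ncnorm a (\<lambda>w. P w - Q w) = ncnorm a (\<lambda>w. Q w - P w)"
  by (simp add: ncnorm_def norm_minus_commute)

lemma ncnorm_mono:
  assumes "0 \<le> a" "a \<le> b" "nc_summable b P"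
  shows "nc_summable a P" "ncnorm a P \<le> ncnorm b P"
proof -
  have le: "norm (P w) * a ^ length w \<le> norm (P w) * b ^ length w" for w
    using assms by (intro mult_left_mono power_mono) auto
  show s: "nc_summable a P" using assms unfolding nc_summable_def
    by (intro summable_on_comparison_test[OF assms(3)[unfolded nc_summable_def]]) (use le in auto)
  show "ncnorm a P \<le> ncnorm b P" unfolding ncnorm_def
    using s assms le unfolding nc_summable_def by (intro infsum_mono) auto
qed

lemma ncnorm_ncdelta: "nc_summable A (ncdelta q)" "ncnorm A (ncdelta q) = A ^ length q"
proof -
  have "((\<lambda>w. norm (ncdelta q w) * A ^ length w) has_sum A ^ length q) {q}"
    by (rule has_sum_finiteI) (simp_all add: ncdelta_def)
  then have "((\<lambda>w. norm (ncdelta q w) * A ^ length w) has_sum A ^ length q) UNIV"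
    by (rule has_sum_cong_neutral[THEN iffD1, rotated -1]) (auto simp: ncdelta_def)
  then show "nc_summable A (ncdelta q)" "ncnorm A (ncdelta q) = A ^ length q"
    unfolding nc_summable_def ncnorm_def by (auto simp: has_sum_iff)
qed

lemma ncnorm_ncgen: "nc_summable a (ncgen i)" "ncnorm a (ncgen i) = a"
  by (simp_all add: ncgen_ncdelta ncnorm_ncdelta)

section \<open>Absolutely summable families of series\<close>

text \<open>If the norms of the series D_q, weighted by |c_q|, are summable, then the double
  family (q, w) \<mapsto> c_q D_q(w) is absolutely summable; this justifies exchanging the order
  of summation.\<close>
lemma nc_family_abs_summable:
  fixes c :: "'q \<Rightarrow> complex" and D :: "'q \<Rightarrow> ncser"
  assumes A: "A \<ge> 0" and D: "\<And>q. c q \<noteq> 0 \<Longrightarrow> nc_summable A (D q)"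
    and norms: "(\<lambda>q. norm (c q) * ncnorm A (D q)) summable_on UNIV"
  shows "(\<lambda>(q,w). norm (c q) * (norm (D q w) * A ^ length w)) summable_on UNIV"
proof -
  define g where "g = (\<lambda>(q,w). norm (c q) * (norm (D q w) * A ^ length w))"
  have inner: "((\<lambda>w. g (q,w)) has_sum norm (c q) * ncnorm A (D q)) UNIV" for q
  proof (cases "c q = 0")
    case True then show ?thesis by (simp add: g_def)
  next
    case False
    then have "((\<lambda>w. norm (D q w) * A ^ length w) has_sum ncnorm A (D q)) UNIV"
      using D unfolding nc_summable_def ncnorm_def by simp
    then show ?thesis unfolding g_def by (simp add: has_sum_cmult_right)
  qed
  have "0 \<le> g x" for x unfolding g_def using A by (auto simp: case_prod_unfold)
  then have "g summable_on (UNIV \<times> UNIV)"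
    using summable_on_SigmaI[where A=UNIV and B="\<lambda>_. UNIV", OF inner norms] by auto
  then show ?thesis unfolding g_def by simp
qed

lemma nc_family:
  fixes c :: "'q \<Rightarrow> complex" and D :: "'q \<Rightarrow> ncser"
  assumes A: "A > 0" and D: "\<And>q. c q \<noteq> 0 \<Longrightarrow> nc_summable A (D q)"
    and norms: "(\<lambda>q. norm (c q) * ncnorm A (D q)) summable_on UNIV"
  shows nc_family_summable: "\<And>w. (\<lambda>q. c q * D q w) summable_on UNIV"
    and nc_family_nc_summable: "nc_summable A (\<lambda>w. \<Sum>\<^sub>\<infinity>q. c q * D q w)"
    and nc_family_ncnorm_le:
      "ncnorm A (\<lambda>w. \<Sum>\<^sub>\<infinity>q. c q * D q w) \<le> (\<Sum>\<^sub>\<infinity>q. norm (c q) * ncnorm A (D q))"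
proof -
  define g where "g = (\<lambda>(q,w). norm (c q) * (norm (D q w) * A ^ length w))"
  have inner: "((\<lambda>w. g (q,w)) has_sum norm (c q) * ncnorm A (D q)) UNIV" for q
  proof (cases "c q = 0")
    case True then show ?thesis by (simp add: g_def)
  next
    case False
    then have "((\<lambda>w. norm (D q w) * A ^ length w) has_sum ncnorm A (D q)) UNIV"
      using D unfolding nc_summable_def ncnorm_def by simp
    then show ?thesis unfolding g_def by (simp add: has_sum_cmult_right)
  qed
  have "g summable_on (UNIV \<times> UNIV)"
    using nc_family_abs_summable[OF _ D norms] A unfolding g_def by simp
  then have g_swapped: "(\<lambda>(w,q). g (q,w)) summable_on (UNIV \<times> UNIV)"
    by (subst (asm) summable_on_swap) simp
  have g_col: "(\<lambda>q. g (q,w)) summable_on UNIV" for w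
    using summable_on_SigmaD1[of "\<lambda>w q. g (q,w)" UNIV "\<lambda>_. UNIV" w] g_swapped by auto
  have Apos: "A ^ length w > 0" for w using A by simp
  have term_le: "norm (c q * D q w) \<le> g (q,w) / A ^ length w" for q w
    using Apos[of w] A by (simp add: g_def norm_mult field_simps)
  have g_col': "(\<lambda>q. g (q,w) / A ^ length w) summable_on UNIV" for w
    using g_col[of w] by (simp add: divide_inverse summable_on_cmult_left)
  have abs: "(\<lambda>q. norm (c q * D q w)) summable_on UNIV" for w
    by (rule summable_on_comparison_test[OF g_col']) (use term_le in auto)
  show "(\<lambda>q. c q * D q w) summable_on UNIV" for w
    using summable_on_iff_abs_summable_on_complex abs by blast
  have coeff_le: "norm (\<Sum>\<^sub>\<infinity>q. c q * D q w) * A ^ length w \<le> (\<Sum>\<^sub>\<infinity>q. g (q,w))" for w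
  proof -
    have "norm (\<Sum>\<^sub>\<infinity>q. c q * D q w) \<le> (\<Sum>\<^sub>\<infinity>q. norm (c q * D q w))"
      by (rule norm_infsum_bound) (rule abs)
    also have "\<dots> \<le> (\<Sum>\<^sub>\<infinity>q. g (q,w) / A ^ length w)"
      by (rule infsum_mono[OF abs g_col']) (rule term_le)
    also have "\<dots> = (\<Sum>\<^sub>\<infinity>q. g (q,w)) / A ^ length w"
      by (simp add: divide_inverse infsum_cmult_left')
    finally show ?thesis using Apos[of w] by (simp add: field_simps)
  qed
  have rows: "(\<lambda>w. \<Sum>\<^sub>\<infinity>q. g (q,w)) summable_on UNIV"
    using summable_on_Sigma_banach[of "\<lambda>w q. g (q,w)" UNIV "\<lambda>_. UNIV"] g_swapped by auto
  show sum: "nc_summable A (\<lambda>w. \<Sum>\<^sub>\<infinity>q. c q * D q w)" unfolding nc_summable_def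
    by (rule summable_on_comparison_test[OF rows]) (use coeff_le A in auto)
  have "ncnorm A (\<lambda>w. \<Sum>\<^sub>\<infinity>q. c q * D q w) \<le> (\<Sum>\<^sub>\<infinity>w. \<Sum>\<^sub>\<infinity>q. g (q,w))"
    unfolding ncnorm_def by (rule infsum_mono[OF sum[unfolded nc_summable_def] rows]) (rule coeff_le)
  also have "\<dots> = (\<Sum>\<^sub>\<infinity>q. \<Sum>\<^sub>\<infinity>w. g (q,w))"
    by (rule infsum_swap_banach) (use g_swapped in auto)
  also have "\<dots> = (\<Sum>\<^sub>\<infinity>q. norm (c q) * ncnorm A (D q))"
    by (rule infsum_cong) (use inner in \<open>auto simp: has_sum_iff\<close>)
  finally show "ncnorm A (\<lambda>w. \<Sum>\<^sub>\<infinity>q. c q * D q w) \<le> (\<Sum>\<^sub>\<infinity>q. norm (c q) * ncnorm A (D q))" .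
qed

lemma has_sum_product_real:
  fixes f g :: "'a \<Rightarrow> real"
  assumes "\<And>x. f x \<ge> 0" "\<And>x. g x \<ge> 0" "f summable_on UNIV" "g summable_on UNIV"
  shows "((\<lambda>(u,v). f u * g v) has_sum (infsum f UNIV * infsum g UNIV)) UNIV"
proof -
  have inner: "((\<lambda>v. f u * g v) has_sum f u * infsum g UNIV) UNIV" for u
    using assms by (intro has_sum_cmult_right) auto
  have outer: "((\<lambda>u. f u * infsum g UNIV) has_sum infsum f UNIV * infsum g UNIV) UNIV"
    using assms by (intro has_sum_cmult_left) auto
  have "(\<lambda>(u,v). f u * g v) summable_on Sigma UNIV (\<lambda>_. UNIV)"
    by (rule summable_on_SigmaI[where g="\<lambda>u. f u * infsum g UNIV"])
      (use inner outer assms in \<open>auto intro: has_sum_imp_summable\<close>)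
  then have "((\<lambda>(u,v). f u * g v) has_sum (infsum f UNIV * infsum g UNIV)) (Sigma UNIV (\<lambda>_. UNIV))"
    by (intro has_sum_SigmaI[OF _ outer]) (use inner in auto)
  then show ?thesis by simp
qed

lemma has_sum_product_complex:
  fixes a b :: "'a \<Rightarrow> complex"
  assumes "a summable_on UNIV" "b summable_on UNIV"
  shows "((\<lambda>(u,v). a u * b v) has_sum (infsum a UNIV * infsum b UNIV)) UNIV"
proof -
  have na: "(\<lambda>u. norm (a u)) summable_on UNIV" and nb: "(\<lambda>u. norm (b u)) summable_on UNIV"
    using assms summable_on_iff_abs_summable_on_complex by blast+
  have "(\<lambda>(u,v). norm (a u) * norm (b v)) summable_on UNIV"
    using has_sum_product_real[OF _ _ na nb] has_sum_imp_summable by auto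
  then have "(\<lambda>x. norm ((\<lambda>(u,v). a u * b v) x)) summable_on UNIV"
    by (simp add: case_prod_unfold norm_mult)
  then have s: "(\<lambda>(u,v). a u * b v) summable_on Sigma UNIV (\<lambda>_. UNIV)"
    using summable_on_iff_abs_summable_on_complex by auto
  have inner: "((\<lambda>v. a u * b v) has_sum a u * infsum b UNIV) UNIV" for u
    using assms by (intro has_sum_cmult_right) auto
  have outer: "((\<lambda>u. a u * infsum b UNIV) has_sum infsum a UNIV * infsum b UNIV) UNIV"
    using assms by (intro has_sum_cmult_left) auto
  have "((\<lambda>(u,v). a u * b v) has_sum (infsum a UNIV * infsum b UNIV)) (Sigma UNIV (\<lambda>_. UNIV))"
    by (intro has_sum_SigmaI[OF _ outer s]) (use inner in auto)
  then show ?thesis by simp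
qed

lemma has_sum_finite_sum:
  fixes f :: "'i \<Rightarrow> 'a \<Rightarrow> complex"
  assumes "finite I" "\<And>i. i \<in> I \<Longrightarrow> ((f i) has_sum s i) UNIV"
  shows "((\<lambda>x. \<Sum>i\<in>I. f i x) has_sum (\<Sum>i\<in>I. s i)) UNIV"
  using assms
proof (induction I rule: finite_induct)
  case empty then show ?case by simp
next
  case (insert i I) then show ?case by (simp add: has_sum_add)
qed

lemma has_sum_single:
  assumes "\<And>x. x \<noteq> a \<Longrightarrow> f x = 0"
  shows "(f has_sum f a) UNIV"
proof -
  have "(f has_sum f a) {a}" by (rule has_sum_finiteI) auto
  then show ?thesis by (rule has_sum_cong_neutral[THEN iffD1, rotated -1]) (use assms in auto)
qed

section \<open>The Banach algebra inequality\<close>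

lemma ncmult_as_family:
  "ncmult P Q = (\<lambda>w. \<Sum>\<^sub>\<infinity>x. (\<lambda>(u,v). P u * Q v) x * (\<lambda>(u,v). ncdelta (u @ v)) x w)"
  using ncmult_has_sum_pairs[of P Q] by (simp add: fun_eq_iff has_sum_iff case_prod_unfold)

lemma ncmult_family_norms:
  assumes "R \<ge> 0" "nc_summable R P" "nc_summable R Q"
  shows "((\<lambda>x. norm ((\<lambda>(u,v). P u * Q v) x) * ncnorm R ((\<lambda>(u,v). ncdelta (u @ v)) x))
           has_sum ncnorm R P * ncnorm R Q) UNIV"
proof -
  have "((\<lambda>(u,v). (norm (P u) * R ^ length u) * (norm (Q v) * R ^ length v))
          has_sum ncnorm R P * ncnorm R Q) UNIV"
    unfolding ncnorm_def using assms unfolding nc_summable_def by (intro has_sum_product_real) auto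
  then show ?thesis
    by (simp add: case_prod_unfold ncnorm_ncdelta norm_mult power_add mult_ac)
qed

lemma ncnorm_ncmult:
  assumes a: "a > 0" and P: "nc_summable a P" and Q: "nc_summable a Q"
  shows "nc_summable a (ncmult P Q)" "ncnorm a (ncmult P Q) \<le> ncnorm a P * ncnorm a Q"
proof -
  note norms = ncmult_family_norms[OF _ P Q]
  have D: "nc_summable a ((\<lambda>(u,v). ncdelta (u @ v)) x)" for x
    by (simp add: case_prod_unfold ncnorm_ncdelta)
  have sum: "(\<lambda>x. norm ((\<lambda>(u,v). P u * Q v) x) * ncnorm a ((\<lambda>(u,v). ncdelta (u @ v)) x)) summable_on UNIV"
    using norms a has_sum_imp_summable by auto
  show "nc_summable a (ncmult P Q)"
    unfolding ncmult_as_family by (rule nc_family_nc_summable[OF a D sum])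
  have "ncnorm a (ncmult P Q) \<le> (\<Sum>\<^sub>\<infinity>x. norm ((\<lambda>(u,v). P u * Q v) x) * ncnorm a ((\<lambda>(u,v). ncdelta (u @ v)) x))"
    unfolding ncmult_as_family by (rule nc_family_ncnorm_le[OF a D sum])
  also have "\<dots> = ncnorm a P * ncnorm a Q" using norms a by (simp add: has_sum_iff)
  finally show "ncnorm a (ncmult P Q) \<le> ncnorm a P * ncnorm a Q" .
qed

lemma ncnorm_ncmon_le:
  assumes a: "a > 0" and Y: "\<And>i. nc_summable a (Y i)" "\<And>i. ncnorm a (Y i) \<le> R"
  shows "nc_summable a (ncmon Y q) \<and> ncnorm a (ncmon Y q) \<le> R ^ length q"
proof (induction q)
  case Nil then show ?case by (simp add: ncone_ncdelta ncnorm_ncdelta)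
next
  case (Cons j q)
  have R: "R \<ge> 0" using ncnorm_nonneg[of a "Y 0"] Y(2)[of 0] a by linarith
  have "ncnorm a (ncmon Y (j#q)) \<le> ncnorm a (Y j) * ncnorm a (ncmon Y q)"
    unfolding ncmon_Cons using ncnorm_ncmult[OF a Y(1)] Cons by auto
  also have "\<dots> \<le> R * R ^ length q"
    using Cons Y(2)[of j] ncnorm_nonneg[of a] a R by (intro mult_mono) auto
  finally show ?case unfolding ncmon_Cons using ncnorm_ncmult[OF a Y(1)] Cons by auto
qed

section \<open>Substitution\<close>

lemma ncsubst_fun: "ncsubst P Y = (\<lambda>w. \<Sum>\<^sub>\<infinity>q. P q * ncmon Y q w)"
  by (rule ext) (simp add: ncsubst_def)

lemma ncsubst_bounds:
  assumes a: "a > 0" and Y: "\<And>i. nc_summable a (Y i)" "\<And>i. ncnorm a (Y i) \<le> R"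
    and R: "R \<ge> 0" and P: "nc_summable R P"
  shows ncsubst_summable: "\<And>w. (\<lambda>q. P q * ncmon Y q w) summable_on UNIV"
    and ncsubst_nc_summable: "nc_summable a (ncsubst P Y)"
    and ncsubst_ncnorm_le: "ncnorm a (ncsubst P Y) \<le> ncnorm R P"
proof -
  have mon: "nc_summable a (ncmon Y q) \<and> ncnorm a (ncmon Y q) \<le> R ^ length q" for q
    using ncnorm_ncmon_le[of a Y R] a Y by blast
  have mon_summable: "nc_summable a (ncmon Y q)" for q using mon by blast
  have le: "norm (P q) * ncnorm a (ncmon Y q) \<le> norm (P q) * R ^ length q" for q
    using mon[of q] by (intro mult_left_mono) auto
  have norms: "(\<lambda>q. norm (P q) * ncnorm a (ncmon Y q)) summable_on UNIV"
    using P unfolding nc_summable_def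
    by (rule summable_on_comparison_test) (use le a ncnorm_nonneg in auto)
  show "(\<lambda>q. P q * ncmon Y q w) summable_on UNIV" for w by (rule nc_family_summable[OF a mon_summable norms])
  show "nc_summable a (ncsubst P Y)" unfolding ncsubst_fun by (rule nc_family_nc_summable[OF a mon_summable norms])
  have "ncnorm a (ncsubst P Y) \<le> (\<Sum>\<^sub>\<infinity>q. norm (P q) * ncnorm a (ncmon Y q))"
    unfolding ncsubst_fun by (rule nc_family_ncnorm_le[OF a mon_summable norms])
  also have "\<dots> \<le> (\<Sum>\<^sub>\<infinity>q. norm (P q) * R ^ length q)"
    by (rule infsum_mono[OF norms P[unfolded nc_summable_def]]) (rule le)
  also have "\<dots> = ncnorm R P" by (simp add: ncnorm_def)
  finally show "ncnorm a (ncsubst P Y) \<le> ncnorm R P" .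
qed

lemma ncsubst_ncdelta: "ncsubst (ncdelta q) Y = ncmon Y q"
  by (rule ext) (simp add: ncsubst_def, subst infsumI[OF has_sum_single[where a=q]], auto simp: ncdelta_def)

lemma ncsubst_ncgen_tuple: "ncsubst P ncgen = P"
  by (rule ext) (simp add: ncsubst_def ncmon_ncgen, subst infsumI[OF has_sum_single], auto simp: ncdelta_def)

lemma ncsubst_ncone: "ncsubst ncone Y = ncone"
  by (simp add: ncone_ncdelta ncsubst_ncdelta)

lemma ncsubst_ncgen: "ncsubst (ncgen j) Y = Y j"
  by (rule ext) (simp add: ncgen_ncdelta ncsubst_ncdelta ncmon_Cons ncmult_one_right)

lemma ncsubst_diff:
  assumes a: "a > 0" and Y: "\<And>i. nc_summable a (Y i)" "\<And>i. ncnorm a (Y i) \<le> R" and R: "R \<ge> 0"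
    and P: "nc_summable R P" and Q: "nc_summable R Q"
  shows "ncsubst (\<lambda>w. P w - Q w) Y w = ncsubst P Y w - ncsubst Q Y w"
proof -
  have "((\<lambda>q. P q * ncmon Y q w + (- (Q q * ncmon Y q w))) has_sum (ncsubst P Y w + - ncsubst Q Y w)) UNIV"
    unfolding ncsubst_def
    by (intro has_sum_add has_sum_uminusI) (use ncsubst_summable[OF a Y R] P Q in auto)
  then show ?thesis unfolding ncsubst_def by (simp add: has_sum_iff algebra_simps)
qed

lemma ncsubst_infsum:
  fixes c :: "'q \<Rightarrow> complex" and D :: "'q \<Rightarrow> ncser"
  assumes a: "a > 0" and Y: "\<And>i. nc_summable a (Y i)" "\<And>i. ncnorm a (Y i) \<le> R" and R: "R > 0"
    and D: "\<And>q. c q \<noteq> 0 \<Longrightarrow> nc_summable R (D q)"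
    and norms: "(\<lambda>q. norm (c q) * ncnorm R (D q)) summable_on UNIV"
  shows "ncsubst (\<lambda>r. \<Sum>\<^sub>\<infinity>q. c q * D q r) Y w = (\<Sum>\<^sub>\<infinity>q. c q * ncsubst (D q) Y w)"
proof -
  have mon: "nc_summable a (ncmon Y r) \<and> ncnorm a (ncmon Y r) \<le> R ^ length r" for r
    using ncnorm_ncmon_le[of a Y R] a Y by blast
  have mon_coeff: "norm (ncmon Y r w) \<le> R ^ length r / a ^ length w" for r
  proof -
    have "norm (ncmon Y r w) * a ^ length w \<le> R ^ length r"
      using ncnorm_coeff_le[of a "ncmon Y r" w] mon[of r] a by auto
    then show ?thesis using a by (simp add: field_simps)
  qed
  define f where "f = (\<lambda>(q,r). c q * D q r * ncmon Y r w)"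
  have abs: "(\<lambda>(q,r). norm (c q) * (norm (D q r) * R ^ length r)) summable_on UNIV"
    by (rule nc_family_abs_summable) (use R D norms in auto)
  then have abs_scaled: "(\<lambda>x. (\<lambda>(q,r). norm (c q) * (norm (D q r) * R ^ length r)) x * (1 / a ^ length w)) summable_on UNIV"
    by (rule summable_on_cmult_left)
  have "(\<lambda>x. norm (f x)) summable_on UNIV"
  proof (rule summable_on_comparison_test[OF abs_scaled])
    fix x show "norm (f x) \<le> (\<lambda>(q,r). norm (c q) * (norm (D q r) * R ^ length r)) x * (1 / a ^ length w)"
    proof (cases x)
      case (Pair q r)
      have "norm (f x) = norm (c q) * norm (D q r) * norm (ncmon Y r w)"
        using Pair by (simp add: f_def norm_mult)
      also have "\<dots> \<le> norm (c q) * norm (D q r) * (R ^ length r / a ^ length w)"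
        by (intro mult_left_mono mon_coeff) auto
      finally show ?thesis using Pair by simp
    qed
  qed simp
  then have f_summable: "f summable_on (UNIV \<times> UNIV)"
    using summable_on_iff_abs_summable_on_complex by auto
  have "ncsubst (\<lambda>r. \<Sum>\<^sub>\<infinity>q. c q * D q r) Y w = (\<Sum>\<^sub>\<infinity>r. \<Sum>\<^sub>\<infinity>q. c q * D q r * ncmon Y r w)"
    unfolding ncsubst_def by (simp add: infsum_cmult_left')
  also have "\<dots> = (\<Sum>\<^sub>\<infinity>q. \<Sum>\<^sub>\<infinity>r. c q * D q r * ncmon Y r w)"
    using infsum_swap_banach[of "\<lambda>q r. c q * D q r * ncmon Y r w" UNIV UNIV] f_summable
    unfolding f_def by simp
  also have "\<dots> = (\<Sum>\<^sub>\<infinity>q. c q * ncsubst (D q) Y w)"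
    unfolding ncsubst_def by (simp add: infsum_cmult_right' mult.assoc)
  finally show ?thesis .
qed

lemma ncsubst_ncmult:
  assumes a: "a > 0" and Y: "\<And>i. nc_summable a (Y i)" "\<And>i. ncnorm a (Y i) \<le> R" and R: "R > 0"
    and U: "nc_summable R U" and V: "nc_summable R V"
  shows "ncsubst (ncmult U V) Y w = ncmult (ncsubst U Y) (ncsubst V Y) w"
proof -
  have D: "nc_summable R ((\<lambda>(u,v). ncdelta (u @ v)) x)" for x
    by (simp add: case_prod_unfold ncnorm_ncdelta)
  have norms: "(\<lambda>x. norm ((\<lambda>(u,v). U u * V v) x) * ncnorm R ((\<lambda>(u,v). ncdelta (u @ v)) x)) summable_on UNIV"
    using ncmult_family_norms[OF _ U V] R has_sum_imp_summable by auto
  have "ncsubst (ncmult U V) Y w =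
      (\<Sum>\<^sub>\<infinity>x. (\<lambda>(u,v). U u * V v) x * ncsubst ((\<lambda>(u,v). ncdelta (u @ v)) x) Y w)"
    unfolding ncmult_as_family[of U V] by (rule ncsubst_infsum[OF a Y(1) Y(2) R D norms])
  also have "\<dots> = (\<Sum>\<^sub>\<infinity>(u,v). U u * V v * ncmult (ncmon Y u) (ncmon Y v) w)"
    by (rule infsum_cong) (auto simp: ncsubst_ncdelta ncmon_append)
  also have "\<dots> = ncmult (ncsubst U Y) (ncsubst V Y) w"
  proof (rule infsumI)
    let ?F = "\<lambda>i (u,v). (U u * ncmon Y u (take i w)) * (V v * ncmon Y v (drop i w))"
    have "(?F i has_sum (ncsubst U Y (take i w) * ncsubst V Y (drop i w))) UNIV" for i
      unfolding ncsubst_def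
      by (rule has_sum_product_complex; rule ncsubst_summable[of a Y R]) (use a Y R U V in auto)
    then have "((\<lambda>x. \<Sum>i\<le>length w. ?F i x)
        has_sum (\<Sum>i\<le>length w. ncsubst U Y (take i w) * ncsubst V Y (drop i w))) UNIV"
      by (intro has_sum_finite_sum) auto
    moreover have "(\<lambda>x. \<Sum>i\<le>length w. ?F i x) = (\<lambda>(u,v). U u * V v * ncmult (ncmon Y u) (ncmon Y v) w)"
      by (auto simp: fun_eq_iff ncmult_def sum_distrib_left algebra_simps)
    ultimately show "((\<lambda>(u,v). U u * V v * ncmult (ncmon Y u) (ncmon Y v) w)
        has_sum ncmult (ncsubst U Y) (ncsubst V Y) w) UNIV"
      by (simp add: ncmult_def)
  qed
  finally show ?thesis .
qed

lemma ncsubst_ncmon: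
  assumes a: "a > 0" and Y: "\<And>i. nc_summable a (Y i)" "\<And>i. ncnorm a (Y i) \<le> R" and R: "R > 0"
    and G: "\<And>i. nc_summable R (G i)" "\<And>i. ncnorm R (G i) \<le> M"
  shows "ncsubst (ncmon G q) Y = ncmon (\<lambda>i. ncsubst (G i) Y) q"
proof (induction q)
  case Nil then show ?case by (simp add: ncsubst_ncone)
next
  case (Cons j q)
  have "nc_summable R (ncmon G q)" using ncnorm_ncmon_le[of R G M] R G by blast
  then show ?case
    by (simp add: ncmon_Cons fun_eq_iff ncsubst_ncmult[OF a Y(1) Y(2) R G(1)] Cons.IH)
qed

lemma ncsubst_ncsubst:
  assumes a: "a > 0" and Y: "\<And>i. nc_summable a (Y i)" "\<And>i. ncnorm a (Y i) \<le> R" and R: "R > 0"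
    and G: "\<And>i. nc_summable R (G i)" "\<And>i. ncnorm R (G i) \<le> M" and P: "nc_summable M P"
  shows "ncsubst (ncsubst P G) Y w = ncsubst P (\<lambda>i. ncsubst (G i) Y) w"
proof -
  have mon: "nc_summable R (ncmon G q) \<and> ncnorm R (ncmon G q) \<le> M ^ length q" for q
    using ncnorm_ncmon_le[of R G M] R G by blast
  have le: "norm (P q) * ncnorm R (ncmon G q) \<le> norm (P q) * M ^ length q" for q
    using mon[of q] by (intro mult_left_mono) auto
  have norms: "(\<lambda>q. norm (P q) * ncnorm R (ncmon G q)) summable_on UNIV"
    using P unfolding nc_summable_def
    by (rule summable_on_comparison_test) (use le R ncnorm_nonneg in auto)
  have "ncsubst (ncsubst P G) Y w = (\<Sum>\<^sub>\<infinity>q. P q * ncsubst (ncmon G q) Y w)"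
    unfolding ncsubst_fun[of P G] by (rule ncsubst_infsum[OF a Y(1) Y(2) R _ norms]) (use mon in blast)
  also have "\<dots> = ncsubst P (\<lambda>i. ncsubst (G i) Y) w"
    by (simp add: ncsubst_def ncsubst_ncmon[OF a Y(1) Y(2) R G(1) G(2)])
  finally show ?thesis .
qed

section \<open>The Lipschitz estimate for substitution\<close>

text \<open>Telescoping a monomial: if all G_i, H_i have norm at most M and \<parallel>G_i - H_i\<parallel> \<le> d, then
  \<parallel>G_q - H_q\<parallel> \<le> |q| M^(|q|-1) d.\<close>
lemma ncmon_lipschitz:
  assumes a: "a > 0"
    and G: "\<And>i. nc_summable a (G i)" "\<And>i. ncnorm a (G i) \<le> M"
    and H: "\<And>i. nc_summable a (H i)" "\<And>i. ncnorm a (H i) \<le> M"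
    and d: "\<And>i. ncnorm a (\<lambda>w. G i w - H i w) \<le> d"
  shows "ncnorm a (\<lambda>w. ncmon G q w - ncmon H q w) \<le> real (length q) * M ^ (length q - 1) * d"
proof (induction q)
  case Nil then show ?case by (simp add: ncnorm_def)
next
  case (Cons j q)
  have M: "M \<ge> 0" using ncnorm_nonneg[of a "G 0"] G(2)[of 0] a by linarith
  have d0: "d \<ge> 0" using ncnorm_nonneg[of a "\<lambda>w. G 0 w - H 0 w"] d[of 0] a by linarith
  have mG: "nc_summable a (ncmon G q)" using ncnorm_ncmon_le[of a G M] a G by blast
  have mH: "nc_summable a (ncmon H q)" "ncnorm a (ncmon H q) \<le> M ^ length q"
    using ncnorm_ncmon_le[of a H M] a H by blast+
  have s1: "nc_summable a (\<lambda>x. ncmon G q x - ncmon H q x)" using ncnorm_diff(1) mG mH a by auto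
  have s2: "nc_summable a (\<lambda>x. G j x - H j x)" using ncnorm_diff(1) G H a by auto
  note prod1 = ncnorm_ncmult[OF a G(1)[of j] s1] and prod2 = ncnorm_ncmult[OF a s2 mH(1)]
  have "ncnorm a (\<lambda>w. ncmon G (j#q) w - ncmon H (j#q) w) =
      ncnorm a (\<lambda>w. ncmult (G j) (\<lambda>x. ncmon G q x - ncmon H q x) w + ncmult (\<lambda>x. G j x - H j x) (ncmon H q) w)"
    by (simp add: ncmon_Cons ncmult_diff)
  also have "\<dots> \<le> ncnorm a (G j) * ncnorm a (\<lambda>x. ncmon G q x - ncmon H q x)
      + ncnorm a (\<lambda>x. G j x - H j x) * ncnorm a (ncmon H q)"
    using ncnorm_add(2)[OF _ prod1(1) prod2(1)] prod1(2) prod2(2) a by linarith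
  also have "\<dots> \<le> M * (real (length q) * M ^ (length q - 1) * d) + d * M ^ length q"
    using Cons G(2)[of j] d[of j] mH ncnorm_nonneg[of a] a M d0
    by (intro add_mono mult_mono) auto
  also have "\<dots> = real (length (j#q)) * M ^ (length (j#q) - 1) * d"
    by (cases "length q") (auto simp: algebra_simps)
  finally show ?case .
qed

text \<open>Mean value bound for x^k on [M, B]: k M^(k-1) (B - M) \<le> B^k.\<close>
lemma power_derivative_le:
  fixes M B :: real
  assumes "0 \<le> M" "M < B"
  shows "real k * M ^ (k - 1) * (B - M) \<le> B ^ k"
proof (induction k)
  case 0 then show ?case by simp
next
  case (Suc k)
  have Mk: "M ^ k \<le> B ^ k" using assms by (intro power_mono) auto
  have "real (Suc k) * M ^ (Suc k - 1) * (B - M) = M * (real k * M ^ (k - 1) * (B - M)) + M ^ k * (B - M)"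
    by (cases k) (auto simp: algebra_simps)
  also have "\<dots> \<le> M * B ^ k + B ^ k * (B - M)"
    using Suc assms Mk by (intro add_mono mult_left_mono mult_right_mono) auto
  also have "\<dots> = B ^ Suc k" by (simp add: algebra_simps)
  finally show ?case .
qed

lemma ncmon_lipschitz_radius:
  assumes a: "a > 0"
    and G: "\<And>i. nc_summable a (G i)" "\<And>i. ncnorm a (G i) \<le> M"
    and H: "\<And>i. nc_summable a (H i)" "\<And>i. ncnorm a (H i) \<le> M"
    and d: "\<And>i. ncnorm a (\<lambda>w. G i w - H i w) \<le> d" and B: "M < B"
  shows "ncnorm a (\<lambda>w. ncmon G q w - ncmon H q w) \<le> B ^ length q * d / (B - M)"
proof -
  have M: "M \<ge> 0" using ncnorm_nonneg[of a "G 0"] G(2)[of 0] a by linarith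
  have d0: "d \<ge> 0" using ncnorm_nonneg[of a "\<lambda>w. G 0 w - H 0 w"] d[of 0] a by linarith
  have "real (length q) * M ^ (length q - 1) \<le> B ^ length q / (B - M)"
    using power_derivative_le[OF M B, of "length q"] B by (simp add: field_simps)
  then have "real (length q) * M ^ (length q - 1) * d \<le> B ^ length q / (B - M) * d"
    using d0 by (rule mult_right_mono)
  from order_trans[OF ncmon_lipschitz[of a G M H d q, OF a G H d] this] show ?thesis by simp
qed

lemma ncsubst_lipschitz:
  assumes a: "a > 0"
    and G: "\<And>i. nc_summable a (G i)" "\<And>i. ncnorm a (G i) \<le> M"
    and H: "\<And>i. nc_summable a (H i)" "\<And>i. ncnorm a (H i) \<le> M"
    and d: "\<And>i. ncnorm a (\<lambda>w. G i w - H i w) \<le> d"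
    and B: "M < B" and P: "nc_summable B P"
  shows "nc_summable a (\<lambda>w. ncsubst P G w - ncsubst P H w)"
    "ncnorm a (\<lambda>w. ncsubst P G w - ncsubst P H w) \<le> ncnorm B P * d / (B - M)"
proof -
  have M: "M \<ge> 0" using ncnorm_nonneg[of a "G 0"] G(2)[of 0] a by linarith
  have PM: "nc_summable M P" using ncnorm_mono(1)[OF M _ P] B by simp
  define D where "D = (\<lambda>q w. ncmon G q w - ncmon H q w)"
  have D_summable: "nc_summable a (D q)" for q
    unfolding D_def using ncnorm_diff(1) ncnorm_ncmon_le[of a G M] a G ncnorm_ncmon_le[of a H M] a H a by auto
  have le: "norm (P q) * ncnorm a (D q) \<le> norm (P q) * B ^ length q * (d / (B - M))" for q
    using mult_left_mono[OF ncmon_lipschitz_radius[of a G M H d B q, OF a G H d B] norm_ge_zero[of "P q"]]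
    by (simp add: D_def mult.assoc)
  have majorant: "(\<lambda>q. norm (P q) * B ^ length q * (d / (B - M))) summable_on UNIV"
    using P unfolding nc_summable_def by (rule summable_on_cmult_left)
  have norms: "(\<lambda>q. norm (P q) * ncnorm a (D q)) summable_on UNIV"
    by (rule summable_on_comparison_test[OF majorant]) (use le a ncnorm_nonneg in auto)
  have eq: "(\<lambda>w. ncsubst P G w - ncsubst P H w) = (\<lambda>w. \<Sum>\<^sub>\<infinity>q. P q * D q w)"
  proof (rule ext)
    fix w
    have "((\<lambda>q. P q * ncmon G q w + (- (P q * ncmon H q w))) has_sum (ncsubst P G w + - ncsubst P H w)) UNIV"
      unfolding ncsubst_def
      by (intro has_sum_add has_sum_uminusI)
        (use ncsubst_summable[of a G M P] a G M PM ncsubst_summable[of a H M P] a H M PM in auto)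
    then show "ncsubst P G w - ncsubst P H w = (\<Sum>\<^sub>\<infinity>q. P q * D q w)"
      unfolding D_def by (simp add: has_sum_iff algebra_simps)
  qed
  show "nc_summable a (\<lambda>w. ncsubst P G w - ncsubst P H w)"
    unfolding eq by (rule nc_family_nc_summable[OF a D_summable norms])
  have "ncnorm a (\<lambda>w. ncsubst P G w - ncsubst P H w) \<le> (\<Sum>\<^sub>\<infinity>q. norm (P q) * ncnorm a (D q))"
    unfolding eq by (rule nc_family_ncnorm_le[OF a D_summable norms])
  also have "\<dots> \<le> (\<Sum>\<^sub>\<infinity>q. norm (P q) * B ^ length q * (d / (B - M)))"
    by (rule infsum_mono[OF norms majorant]) (rule le)
  also have "\<dots> = ncnorm B P * (d / (B - M))"
    unfolding ncnorm_def by (rule infsum_cmult_left')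
  finally show "ncnorm a (\<lambda>w. ncsubst P G w - ncsubst P H w) \<le> ncnorm B P * d / (B - M)"
    by simp
qed

section \<open>Series in the first n variables\<close>

definition nc_vars :: "nat \<Rightarrow> ncser \<Rightarrow> bool" where
  "nc_vars n P \<longleftrightarrow> (\<forall>w. \<not> set w \<subseteq> {..<n} \<longrightarrow> P w = 0)"

lemma nc_vars_ncmult: assumes "nc_vars n P" "nc_vars n Q" shows "nc_vars n (ncmult P Q)"
  unfolding nc_vars_def
proof (intro allI impI)
  fix w assume w: "\<not> set w \<subseteq> {..<n}"
  have z: "P (take i w) * Q (drop i w) = 0" for i
  proof -
    have "\<not> set (take i w) \<subseteq> {..<n} \<or> \<not> set (drop i w) \<subseteq> {..<n}"
      using w by (metis append_take_drop_id set_append sup.bounded_iff)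
    then show ?thesis using assms unfolding nc_vars_def by auto
  qed
  show "ncmult P Q w = 0" unfolding ncmult_def by (rule sum.neutral) (use z in blast)
qed

lemma nc_vars_ncmon: assumes "\<And>i. i < n \<Longrightarrow> nc_vars n (G i)" "set q \<subseteq> {..<n}"
  shows "nc_vars n (ncmon G q)"
  using assms(2)
proof (induction q)
  case Nil then show ?case by (simp add: nc_vars_def ncone_def)
next
  case (Cons j q) then show ?case by (simp add: ncmon_Cons nc_vars_ncmult assms(1))
qed

lemma nc_vars_ncsubst: assumes "nc_vars n P" "\<And>i. i < n \<Longrightarrow> nc_vars n (G i)"
  shows "nc_vars n (ncsubst P G)"
  unfolding nc_vars_def
proof (intro allI impI)
  fix w assume w: "\<not> set w \<subseteq> {..<n}"
  have z: "P q * ncmon G q w = 0" for q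
  proof (cases "set q \<subseteq> {..<n}")
    case True then show ?thesis using nc_vars_ncmon[OF assms(2) True] w unfolding nc_vars_def by auto
  next
    case False then show ?thesis using assms(1) unfolding nc_vars_def by auto
  qed
  show "ncsubst P G w = 0" unfolding ncsubst_def by (rule infsum_0) (use z in blast)
qed

lemma ncsubst_cong_vars: assumes "nc_vars n P" "\<And>i. i < n \<Longrightarrow> Y i = Y' i"
  shows "ncsubst P Y = ncsubst P Y'"
proof (rule ext)
  fix w
  have z: "P q * ncmon Y q w = P q * ncmon Y' q w" for q
  proof (cases "set q \<subseteq> {..<n}")
    case True then have "ncmon Y q = ncmon Y' q" using assms(2) by (intro ncmon_cong) auto
    then show ?thesis by simp
  next
    case False then show ?thesis using assms(1) unfolding nc_vars_def by auto
  qed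
  show "ncsubst P Y w = ncsubst P Y' w" unfolding ncsubst_def by (rule infsum_cong) (use z in blast)
qed

lemma nc_vars_limit:
  assumes "\<And>k. nc_vars n (s k)" "\<And>w. (\<lambda>k. s k w) \<longlonglongrightarrow> p w"
  shows "nc_vars n p"
  unfolding nc_vars_def
proof (intro allI impI)
  fix w assume "\<not> set w \<subseteq> {..<n}"
  then have "(\<lambda>k. s k w) \<longlonglongrightarrow> 0" using assms(1) unfolding nc_vars_def by simp
  then show "p w = 0" using assms(2) LIMSEQ_unique by blast
qed

section \<open>Completeness and Picard iteration\<close>

lemma ncnorm_limit_le:
  assumes A: "A \<ge> 0" and lim: "\<And>w. (\<lambda>k. s k w) \<longlonglongrightarrow> p w"
    and ev: "eventually (\<lambda>k. nc_summable A (s k) \<and> ncnorm A (s k) \<le> b) sequentially"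
  shows "nc_summable A p \<and> ncnorm A p \<le> b"
proof -
  have finite_sums: "(\<Sum>w\<in>S. norm (p w) * A ^ length w) \<le> b" if "finite S" for S
  proof (rule tendsto_le[OF trivial_limit_sequentially])
    show "(\<lambda>k. \<Sum>w\<in>S. norm (s k w) * A ^ length w) \<longlonglongrightarrow> (\<Sum>w\<in>S. norm (p w) * A ^ length w)"
      by (intro tendsto_sum tendsto_mult tendsto_norm lim tendsto_const)
    show "eventually (\<lambda>k. (\<Sum>w\<in>S. norm (s k w) * A ^ length w) \<le> b) sequentially"
    proof (rule eventually_mono[OF ev], clarify)
      fix k assume "nc_summable A (s k)" "ncnorm A (s k) \<le> b"
      moreover have "(\<Sum>w\<in>S. norm (s k w) * A ^ length w) \<le> ncnorm A (s k)"
        unfolding ncnorm_def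
        by (rule finite_sum_le_infsum) (use that A \<open>nc_summable A (s k)\<close> in \<open>auto simp: nc_summable_def\<close>)
      ultimately show "(\<Sum>w\<in>S. norm (s k w) * A ^ length w) \<le> b" by linarith
    qed
  qed (rule tendsto_const)
  have summable: "nc_summable A p" unfolding nc_summable_def
    by (rule nonneg_bdd_above_summable_on) (use A finite_sums in \<open>auto intro!: bdd_aboveI\<close>)
  have "ncnorm A p \<le> b" unfolding ncnorm_def
    by (rule infsum_le_finite_sums) (use summable finite_sums in \<open>auto simp: nc_summable_def\<close>)
  then show ?thesis using summable by simp
qed

lemma ncnorm_le_halves_zero:
  assumes A: "A > 0" and P: "nc_summable A P" and le: "\<And>k. ncnorm A P \<le> c * (1/2) ^ k"
  shows "P w = 0"
proof (rule ncnorm_eq0[OF A P])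
  have "(\<lambda>k. c * (1/2::real) ^ k) \<longlonglongrightarrow> c * 0"
    by (intro tendsto_mult tendsto_const LIMSEQ_power_zero) simp
  then show "ncnorm A P \<le> 0" by (intro LIMSEQ_le_const[where X="\<lambda>k. c * (1/2) ^ k"]) (use le in auto)
qed

lemma geometric_convergent:
  fixes s :: "nat \<Rightarrow> complex"
  assumes "\<And>k. norm (s (Suc k) - s k) \<le> c * r ^ k" "0 \<le> r" "r < 1"
  shows "convergent s"
proof -
  have "summable (\<lambda>k. c * r ^ k)" using assms by (intro summable_mult summable_geometric) auto
  then have sm: "summable (\<lambda>k. s (Suc k) - s k)"
    by (rule summable_comparison_test[rotated]) (use assms in auto)
  have "(\<lambda>m. s 0 + (\<Sum>k<m. s (Suc k) - s k)) \<longlonglongrightarrow> s 0 + suminf (\<lambda>k. s (Suc k) - s k)"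
    by (intro tendsto_add tendsto_const summable_LIMSEQ sm)
  then have "s \<longlonglongrightarrow> s 0 + suminf (\<lambda>k. s (Suc k) - s k)"
    by (simp add: sum_lessThan_telescope)
  then show ?thesis by (auto simp: convergent_def)
qed

lemma nc_halving_tail:
  assumes A: "A \<ge> 0" and s: "\<And>k. nc_summable A (s k)"
    and step: "\<And>k. ncnorm A (\<lambda>w. s (Suc k) w - s k w) \<le> c * (1/2) ^ k"
  shows "nc_summable A (\<lambda>w. s (k + j) w - s k w) \<and>
         ncnorm A (\<lambda>w. s (k + j) w - s k w) \<le> 2 * c * ((1/2) ^ k - (1/2) ^ (k + j))"
proof (induction j)
  case 0 then show ?case by (simp add: nc_summable_def ncnorm_def)
next
  case (Suc j)
  have eq: "(\<lambda>w. s (k + Suc j) w - s k w) =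
      (\<lambda>w. (s (Suc (k + j)) w - s (k + j) w) + (s (k + j) w - s k w))"
    by simp
  have last: "nc_summable A (\<lambda>w. s (Suc (k + j)) w - s (k + j) w)"
    using ncnorm_diff(1)[OF A s s] .
  have "ncnorm A (\<lambda>w. s (k + Suc j) w - s k w) \<le> c * (1/2) ^ (k + j) + 2 * c * ((1/2) ^ k - (1/2) ^ (k + j))"
    unfolding eq using ncnorm_add(2)[OF A last conjunct1[OF Suc]] step[of "k + j"] Suc by linarith
  also have "\<dots> = 2 * c * ((1/2) ^ k - (1/2) ^ (k + Suc j))" by (simp add: algebra_simps)
  finally show ?case unfolding eq using ncnorm_add(1)[OF A last conjunct1[OF Suc]] by simp
qed

lemma nc_halving_limit:
  assumes A: "A > 0" and s: "\<And>k. nc_summable A (s k)"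
    and step: "\<And>k. ncnorm A (\<lambda>w. s (Suc k) w - s k w) \<le> c * (1/2) ^ k"
  shows "\<exists>p. (\<forall>w. (\<lambda>k. s k w) \<longlonglongrightarrow> p w) \<and>
             (\<forall>k. nc_summable A (\<lambda>w. p w - s k w) \<and> ncnorm A (\<lambda>w. p w - s k w) \<le> 2 * c * (1/2) ^ k)"
proof -
  have coeff: "norm (s (Suc k) w - s k w) \<le> (c / A ^ length w) * (1/2) ^ k" for k w
  proof -
    have "norm (s (Suc k) w - s k w) * A ^ length w \<le> c * (1/2) ^ k"
      using ncnorm_coeff_le[of A "\<lambda>w. s (Suc k) w - s k w" w] ncnorm_diff(1)[of A, OF _ s s] step[of k] A
      by auto
    then show ?thesis using A by (simp add: field_simps)
  qed
  define p where "p = (\<lambda>w. lim (\<lambda>k. s k w))"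
  have lim: "(\<lambda>k. s k w) \<longlonglongrightarrow> p w" for w
    unfolding p_def convergent_LIMSEQ_iff[symmetric] by (rule geometric_convergent[OF coeff]) auto
  have c: "c \<ge> 0"
    using step[of 0] ncnorm_nonneg[of A "\<lambda>w. s (Suc 0) w - s 0 w"] A by simp
  have dist: "nc_summable A (\<lambda>w. p w - s k w) \<and> ncnorm A (\<lambda>w. p w - s k w) \<le> 2 * c * (1/2) ^ k" for k
  proof (rule ncnorm_limit_le[where s="\<lambda>m w. s m w - s k w"])
    show "(\<lambda>m. s m w - s k w) \<longlonglongrightarrow> p w - s k w" for w
      by (intro tendsto_diff lim tendsto_const)
    show "eventually (\<lambda>m. nc_summable A (\<lambda>w. s m w - s k w) \<and> ncnorm A (\<lambda>w. s m w - s k w) \<le> 2 * c * (1/2) ^ k) sequentially"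
      unfolding eventually_sequentially
    proof (intro exI allI impI)
      fix m assume "k \<le> m"
      then obtain j where m: "m = k + j" using le_Suc_ex by blast
      have "(0::real) \<le> 2 * c * (1/2) ^ (k + j)" using c by simp
      then show "nc_summable A (\<lambda>w. s m w - s k w) \<and> ncnorm A (\<lambda>w. s m w - s k w) \<le> 2 * c * (1/2) ^ k"
        using nc_halving_tail[of A s c k j] A s step m by (auto simp: algebra_simps)
    qed
  qed (use A in auto)
  show ?thesis using lim dist by blast
qed

definition nc_ball :: "real \<Rightarrow> real \<Rightarrow> (nat \<Rightarrow> ncser) \<Rightarrow> bool" where
  "nc_ball a R G \<longleftrightarrow> (\<forall>i. nc_summable a (G i) \<and> ncnorm a (G i) \<le> R)"

lemma nc_ballD: "nc_ball a R G \<Longrightarrow> nc_summable a (G i)" "nc_ball a R G \<Longrightarrow> ncnorm a (G i) \<le> R"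
  by (simp_all add: nc_ball_def)

lemma nc_picard_fixpoint:
  fixes \<Phi> :: "(nat \<Rightarrow> ncser) \<Rightarrow> nat \<Rightarrow> ncser"
  assumes A: "A > 0" and start: "nc_ball A M G0"
    and maps: "\<And>G. nc_ball A M G \<Longrightarrow> nc_ball A M (\<Phi> G)"
    and halves: "\<And>G H d i. nc_ball A M G \<Longrightarrow> nc_ball A M H \<Longrightarrow>
      (\<And>i. ncnorm A (\<lambda>w. G i w - H i w) \<le> d) \<Longrightarrow> ncnorm A (\<lambda>w. \<Phi> G i w - \<Phi> H i w) \<le> d / 2"
  shows "\<exists>G. nc_ball A M G \<and> \<Phi> G = G \<and> (\<forall>i w. (\<lambda>k. (\<Phi> ^^ k) G0 i w) \<longlonglongrightarrow> G i w)"
proof -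
  define Gs where "Gs = (\<lambda>k. (\<Phi> ^^ k) G0)"
  have ball: "nc_ball A M (Gs k)" for k
    by (induction k) (simp_all add: Gs_def start maps)
  then have Gs: "nc_summable A (Gs k i)" "ncnorm A (Gs k i) \<le> M" for k i
    by (auto simp: nc_ball_def)
  have step: "ncnorm A (\<lambda>w. Gs (Suc k) i w - Gs k i w) \<le> 2 * M * (1/2) ^ k" for k i
  proof (induction k arbitrary: i)
    case 0 then show ?case using ncnorm_diff(2)[OF _ Gs(1) Gs(1), of 1 i 0 i] Gs(2)[of 1 i] Gs(2)[of 0 i] A by simp
  next
    case (Suc k)
    have "ncnorm A (\<lambda>w. \<Phi> (Gs (Suc k)) i w - \<Phi> (Gs k) i w) \<le> 2 * M * (1/2) ^ k / 2"
      by (rule halves[OF ball ball Suc.IH])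
    then show ?case by (simp add: Gs_def)
  qed
  have "\<exists>p. (\<forall>w. (\<lambda>k. Gs k i w) \<longlonglongrightarrow> p w) \<and>
      (\<forall>k. nc_summable A (\<lambda>w. p w - Gs k i w) \<and> ncnorm A (\<lambda>w. p w - Gs k i w) \<le> 2 * (2 * M) * (1/2) ^ k)"
    for i using nc_halving_limit[of A "\<lambda>k. Gs k i" "2 * M"] A Gs(1) step by blast
  then have "\<exists>G. \<forall>i. (\<forall>w. (\<lambda>k. Gs k i w) \<longlonglongrightarrow> G i w) \<and>
      (\<forall>k. nc_summable A (\<lambda>w. G i w - Gs k i w) \<and> ncnorm A (\<lambda>w. G i w - Gs k i w) \<le> 4 * M * (1/2) ^ k)"
    by (intro choice allI) simp
  then obtain G where lim: "\<And>i w. (\<lambda>k. Gs k i w) \<longlonglongrightarrow> G i w"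
    and dist: "\<And>i k. ncnorm A (\<lambda>w. G i w - Gs k i w) \<le> 4 * M * (1/2) ^ k"
    by blast
  have "nc_summable A (G i) \<and> ncnorm A (G i) \<le> M" for i
    by (rule ncnorm_limit_le[of A "\<lambda>k. Gs k i"]) (use lim Gs A in auto)
  then have G_ball: "nc_ball A M G" by (simp add: nc_ball_def)
  have "\<Phi> G i w = G i w" for i w
  proof -
    have fix_summable: "nc_summable A (\<lambda>w. \<Phi> G i w - G i w)"
      using ncnorm_diff(1) maps[OF G_ball] G_ball A by (auto simp: nc_ball_def)
    have "ncnorm A (\<lambda>w. \<Phi> G i w - G i w) \<le> 4 * M * (1/2) ^ k" for k
    proof -
      have "(\<lambda>w. \<Phi> G i w - G i w) = (\<lambda>w. (\<Phi> G i w - \<Phi> (Gs k) i w) + (Gs (Suc k) i w - G i w))"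
        by (simp add: Gs_def)
      moreover have "nc_summable A (\<lambda>w. \<Phi> G i w - \<Phi> (Gs k) i w)"
        using ncnorm_diff(1) maps[OF G_ball] maps[OF ball] A by (auto simp: nc_ball_def)
      moreover have "nc_summable A (\<lambda>w. Gs (Suc k) i w - G i w)"
        using ncnorm_diff(1) Gs G_ball A by (auto simp: nc_ball_def)
      moreover have "ncnorm A (\<lambda>w. \<Phi> G i w - \<Phi> (Gs k) i w) \<le> 4 * M * (1/2) ^ k / 2"
        by (rule halves[OF G_ball ball dist])
      moreover have "ncnorm A (\<lambda>w. Gs (Suc k) i w - G i w) \<le> 4 * M * (1/2) ^ Suc k"
        using dist[of i "Suc k"] ncnorm_diff_commute by metis
      ultimately show ?thesis using ncnorm_add(2)[of A] A by fastforce
    qed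
    then have "\<Phi> G i w - G i w = 0" by (rule ncnorm_le_halves_zero[OF A fix_summable])
    then show ?thesis by simp
  qed
  then have "\<Phi> G = G" by blast
  then show ?thesis using G_ball lim unfolding Gs_def by blast
qed

section \<open>Inverting X + F(X)\<close>

text \<open>The choice of constants: with M = (A + B)/2, a series of B-norm at most (B - A)/4 has
  Lipschitz factor 1/2 in the estimate of \<open>ncsubst_lipschitz\<close>.\<close>
lemma halving_constant:
  fixes A B c d :: real
  assumes "A < B" "c \<le> (B - A) / 4" "0 \<le> d"
  shows "c * d / (B - (A + B) / 2) \<le> d / 2"
proof -
  have pos: "B - (A + B) / 2 > 0" using assms by simp
  have "c * d \<le> (B - A) / 4 * d" using assms by (intro mult_right_mono)
  then have "c * d / (B - (A + B) / 2) \<le> (B - A) / 4 * d / (B - (A + B) / 2)"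
    using pos by (intro divide_right_mono) auto
  also have "\<dots> = d / 2" using assms by (simp add: field_simps)
  finally show ?thesis .
qed

lemma nc_right_inverse:
  fixes A B :: real and F :: "nat \<Rightarrow> ncser"
  assumes A: "0 < A" "A < B"
    and F: "\<And>j. nc_summable B (F j)" "\<And>j. ncnorm B (F j) \<le> (B - A) / 4" "\<And>j. nc_vars n (F j)"
  shows "\<exists>G. nc_ball A ((A + B) / 2) G \<and> (\<forall>i<n. nc_vars n (G i)) \<and>
             (\<forall>i. G i = (\<lambda>w. ncgen i w - ncsubst (F i) G w))"
proof -
  define M where "M = (A + B) / 2"
  define \<Phi> where "\<Phi> = (\<lambda>(G::nat \<Rightarrow> ncser) j w. ncgen j w - ncsubst (F j) G w)"
  have M: "0 \<le> M" "A \<le> M" "M < B" using A by (auto simp: M_def)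
  have FM: "nc_summable M (F j)" "ncnorm M (F j) \<le> (B - A) / 4" for j
    using ncnorm_mono[OF M(1) _ F(1)[of j]] M F(2)[of j] by auto
  have maps: "nc_ball A M (\<Phi> G)" if G: "nc_ball A M G" for G
  proof -
    have "nc_summable A (\<Phi> G i) \<and> ncnorm A (\<Phi> G i) \<le> M" for i
    proof -
      have FG: "nc_summable A (ncsubst (F i) G)" "ncnorm A (ncsubst (F i) G) \<le> ncnorm M (F i)"
        using ncsubst_nc_summable[of A G M "F i"] ncsubst_ncnorm_le[of A G M "F i"]
          A M FM nc_ballD[OF G] by auto
      have "ncnorm A (\<Phi> G i) \<le> A + ncnorm M (F i)"
        unfolding \<Phi>_def using ncnorm_diff(2)[OF _ ncnorm_ncgen(1)[of A i] FG(1)] A FG(2)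
        by (simp add: ncnorm_ncgen)
      then show ?thesis unfolding \<Phi>_def
        using ncnorm_diff(1)[OF _ ncnorm_ncgen(1) FG(1)] FM(2)[of i] A by (simp add: M_def)
    qed
    then show ?thesis by (simp add: nc_ball_def)
  qed
  have halves: "ncnorm A (\<lambda>w. \<Phi> G i w - \<Phi> H i w) \<le> d / 2"
    if G: "nc_ball A M G" and H: "nc_ball A M H" and d: "\<And>i. ncnorm A (\<lambda>w. G i w - H i w) \<le> d"
    for G H d i
  proof -
    have d': "ncnorm A (\<lambda>w. H i w - G i w) \<le> d" for i
      using d[of i] by (subst ncnorm_diff_commute)
    have "0 \<le> ncnorm A (\<lambda>w. G 0 w - H 0 w)" by (rule ncnorm_nonneg) (use A in simp)
    with d[of 0] have "0 \<le> d" by linarith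
    have "ncnorm A (\<lambda>w. \<Phi> G i w - \<Phi> H i w) = ncnorm A (\<lambda>w. ncsubst (F i) H w - ncsubst (F i) G w)"
      by (simp add: \<Phi>_def)
    also have "\<dots> \<le> ncnorm B (F i) * d / (B - M)"
      by (rule ncsubst_lipschitz(2)[of A H M G d B "F i"]) (use A M F nc_ballD[OF G] nc_ballD[OF H] d' in auto)
    also have "\<dots> \<le> d / 2"
      unfolding M_def by (rule halving_constant[OF A(2) F(2) \<open>0 \<le> d\<close>])
    finally show ?thesis .
  qed
  have start: "nc_ball A M ncgen" using M by (simp add: nc_ball_def ncnorm_ncgen)
  obtain G where "nc_ball A M G \<and> \<Phi> G = G \<and> (\<forall>i w. (\<lambda>k. (\<Phi> ^^ k) ncgen i w) \<longlonglongrightarrow> G i w)"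
    using nc_picard_fixpoint[OF A(1) start maps halves] by (rule exE)
  then have G: "nc_ball A M G" "\<Phi> G = G" and lim: "\<And>i w. (\<lambda>k. (\<Phi> ^^ k) ncgen i w) \<longlonglongrightarrow> G i w"
    by blast+
  have iterates_vars: "i < n \<Longrightarrow> nc_vars n ((\<Phi> ^^ k) ncgen i)" for k i
  proof (induction k arbitrary: i)
    case 0 then show ?case by (auto simp: nc_vars_def ncgen_def)
  next
    case (Suc k)
    have vars: "nc_vars n (ncsubst (F i) ((\<Phi> ^^ k) ncgen))"
      by (rule nc_vars_ncsubst[OF F(3)]) (use Suc in blast)
    have step: "(\<Phi> ^^ Suc k) ncgen i = (\<lambda>w. ncgen i w - ncsubst (F i) ((\<Phi> ^^ k) ncgen) w)"
      by (simp add: \<Phi>_def)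
    show ?case unfolding step using vars Suc.prems by (auto simp: nc_vars_def ncgen_def)
  qed
  have "nc_vars n (G i)" if "i < n" for i
    by (rule nc_vars_limit[OF _ lim]) (use iterates_vars that in blast)
  moreover have "G i = (\<lambda>w. ncgen i w - ncsubst (F i) G w)" for i
    using G(2) by (auto simp: \<Phi>_def fun_eq_iff)
  ultimately show ?thesis using G(1) unfolding M_def by blast
qed

lemma fixpoint_equation_composed:
  fixes A' A M :: real and F G Y :: "nat \<Rightarrow> ncser"
  assumes A: "0 < A'" "0 < A" "A \<le> M"
    and F: "\<And>j. nc_summable M (F j)"
    and Y: "\<And>i. nc_summable A' (Y i)" "\<And>i. ncnorm A' (Y i) \<le> A"
    and G: "nc_ball A M G" "\<And>i. G i = (\<lambda>w. ncgen i w - ncsubst (F i) G w)"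
  shows "ncsubst (G i) Y w = Y i w - ncsubst (F i) (\<lambda>i. ncsubst (G i) Y) w"
proof -
  have "nc_summable A (ncsubst (F i) G)"
    by (rule ncsubst_nc_summable[of A G M "F i"]) (use A F nc_ballD[OF G(1)] in auto)
  then have "ncsubst (G i) Y w = ncsubst (ncgen i) Y w - ncsubst (ncsubst (F i) G) Y w"
    by (subst G(2)) (rule ncsubst_diff[of A' Y A]; use A Y ncnorm_ncgen in auto)
  also have "\<dots> = Y i w - ncsubst (F i) (\<lambda>i. ncsubst (G i) Y) w"
    unfolding ncsubst_ncgen
    by (subst ncsubst_ncsubst[of A' Y A G M "F i"]) (use A Y F nc_ballD[OF G(1)] in auto)
  finally show ?thesis .
qed

text \<open>The right inverse is a left inverse: Z = G(Y) satisfies Z + F(Z) = Y = X + F(X), and the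
  contraction estimate in the A'-norm forces Z = X.\<close>
lemma nc_right_inverse_is_left_inverse:
  fixes A' A B :: real and F G :: "nat \<Rightarrow> ncser"
  assumes A: "0 < A'" "A' \<le> A" "A < B"
    and F: "\<And>j. nc_summable B (F j)" "\<And>j. ncnorm B (F j) \<le> (B - A) / 4"
    and Y: "\<And>i. ncnorm A' (\<lambda>w. ncgen i w + F i w) \<le> A"
    and G: "nc_ball A ((A + B) / 2) G" "\<And>i. G i = (\<lambda>w. ncgen i w - ncsubst (F i) G w)"
  shows "ncsubst (G j) (\<lambda>i w. ncgen i w + F i w) = ncgen j"
proof -
  define M where "M = (A + B) / 2"
  define Z where "Z = (\<lambda>i. ncsubst (G i) (\<lambda>i w. ncgen i w + F i w))"
  have M: "0 \<le> M" "A \<le> M" "A' \<le> M" "M < B" using A by (auto simp: M_def)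
  have FM: "nc_summable M (F j)" "nc_summable A' (F j)" for j
    using ncnorm_mono(1)[OF _ _ F(1)[of j]] M A by auto
  have Y_summable: "nc_summable A' (\<lambda>w. ncgen i w + F i w)" for i
    using ncnorm_add(1)[OF _ ncnorm_ncgen(1) FM(2)] A by simp
  have Z: "nc_summable A' (Z i)" "ncnorm A' (Z i) \<le> M" for i
  proof -
    show "nc_summable A' (Z i)" unfolding Z_def
      by (rule ncsubst_nc_summable[of A' _ A]) (use A Y_summable Y nc_ballD[OF G(1)] in auto)
    have "ncnorm A' (Z i) \<le> ncnorm A (G i)" unfolding Z_def
      by (rule ncsubst_ncnorm_le[of A' _ A]) (use A Y_summable Y nc_ballD[OF G(1)] in auto)
    then show "ncnorm A' (Z i) \<le> M" using nc_ballD(2)[OF G(1), of i] by (simp add: M_def)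
  qed
  have diff_eq: "ncnorm A' (\<lambda>w. ncgen i w - Z i w) = ncnorm A' (\<lambda>w. ncsubst (F i) ncgen w - ncsubst (F i) Z w)" for i
  proof -
    have "Z i w = ncgen i w + F i w - ncsubst (F i) Z w" for w
      unfolding Z_def
      by (rule fixpoint_equation_composed[OF A(1) _ M(2) FM(1) Y_summable Y G[folded M_def]]) (use A in simp)
    then show ?thesis by (subst ncnorm_diff_commute) (simp add: ncsubst_ncgen_tuple)
  qed
  have halves: "ncnorm A' (\<lambda>w. ncgen i w - Z i w) \<le> d / 2"
    if d: "\<And>i. ncnorm A' (\<lambda>w. ncgen i w - Z i w) \<le> d" for d i
  proof -
    have "0 \<le> ncnorm A' (\<lambda>w. ncgen 0 w - Z 0 w)" by (rule ncnorm_nonneg) (use A in simp)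
    with d[of 0] have "0 \<le> d" by linarith
    have "ncnorm A' (\<lambda>w. ncsubst (F i) ncgen w - ncsubst (F i) Z w) \<le> ncnorm B (F i) * d / (B - M)"
      by (rule ncsubst_lipschitz(2)[of A' ncgen M Z d B "F i"])
        (use A M Z F d in \<open>simp_all add: ncnorm_ncgen\<close>)
    also have "\<dots> \<le> d / 2" unfolding M_def using halving_constant A F(2) \<open>0 \<le> d\<close> by blast
    finally show ?thesis using diff_eq by simp
  qed
  have bound: "ncnorm A' (\<lambda>w. ncgen i w - Z i w) \<le> (A' + M) * (1/2) ^ k" for k i
  proof (induction k arbitrary: i)
    case 0 show ?case using ncnorm_diff(2)[OF _ ncnorm_ncgen(1)[of A' i] Z(1)[of i]] Z(2)[of i] A
      by (simp add: ncnorm_ncgen)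
  next
    case (Suc k) show ?case using halves[OF Suc.IH] by simp
  qed
  have "ncgen j w - Z j w = 0" for w
    by (rule ncnorm_le_halves_zero[OF A(1) ncnorm_diff(1)[OF _ ncnorm_ncgen(1)[of A' j] Z(1)[of j]] bound]) (use A in simp)
  then show ?thesis by (auto simp: Z_def fun_eq_iff)
qed

theorem mainTheorem2:
  fixes A' A B :: real
  assumes "1 < A'" "A' < A" "A < B"
  shows "\<exists>C>0. \<forall>(n::nat) (f::nat \<Rightarrow> ncser).
           (\<forall>j<n. in_ncA n B (f j)) \<longrightarrow>
           (\<forall>j<n. ncnorm B (f j) < C) \<longrightarrow>
           (\<forall>j<n. ncnorm A' (\<lambda>w. ncgen j w + f j w) \<le> A) \<longrightarrow>
           (\<exists>G::nat \<Rightarrow> ncser. (\<forall>j<n. in_ncA n A (G j)) \<and>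
              (\<forall>j<n. ncsubst (G j) (\<lambda>i w. ncgen i w + f i w) = ncgen j))"
proof (intro exI[of _ "(B - A) / 4"] conjI allI impI)
  show "(B - A) / 4 > 0" using assms by simp
  fix n and f :: "nat \<Rightarrow> ncser"
  assume f_in: "\<forall>j<n. in_ncA n B (f j)" and f_small: "\<forall>j<n. ncnorm B (f j) < (B - A) / 4"
    and Y_bound: "\<forall>j<n. ncnorm A' (\<lambda>w. ncgen j w + f j w) \<le> A"
  define F where "F = (\<lambda>j. if j < n then f j else (\<lambda>_. 0))"
  have F: "nc_summable B (F j)" "ncnorm B (F j) \<le> (B - A) / 4" "nc_vars n (F j)" for j
    using f_in f_small assms by (auto simp: F_def in_ncA_def nc_summable_def nc_vars_def ncnorm_def)
  have Y: "ncnorm A' (\<lambda>w. ncgen i w + F i w) \<le> A" for i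
    using Y_bound assms by (cases "i < n") (auto simp: F_def ncnorm_ncgen)
  obtain G where G: "nc_ball A ((A + B) / 2) G" "\<And>i. i < n \<Longrightarrow> nc_vars n (G i)"
      "\<And>i. G i = (\<lambda>w. ncgen i w - ncsubst (F i) G w)"
    using nc_right_inverse[of A B F n] F assms by auto
  have inverse: "ncsubst (G j) (\<lambda>i w. ncgen i w + F i w) = ncgen j" for j
    by (rule nc_right_inverse_is_left_inverse[OF _ _ _ F(1) F(2) Y G(1) G(3)]) (use assms in auto)
  show "\<exists>G. (\<forall>j<n. in_ncA n A (G j)) \<and> (\<forall>j<n. ncsubst (G j) (\<lambda>i w. ncgen i w + f i w) = ncgen j)"
  proof (intro exI[of _ G] conjI allI impI)
    fix j assume j: "j < n"
    show "in_ncA n A (G j)" using nc_ballD(1)[OF G(1)] G(2)[OF j] by (auto simp: in_ncA_def nc_vars_def nc_summable_def)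
    have "ncsubst (G j) (\<lambda>i w. ncgen i w + f i w) = ncsubst (G j) (\<lambda>i w. ncgen i w + F i w)"
      by (rule ncsubst_cong_vars[OF G(2)[OF j]]) (auto simp: F_def)
    then show "ncsubst (G j) (\<lambda>i w. ncgen i w + f i w) = ncgen j" using inverse by simp
  qed
qed

end
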